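(* An abelian group is almost divisible if and only if it is the direct sum of a divisible group and a bounded group. In particular, every almost divisible abelian group is algebraically compact.
   Context: For a prime $p$, the $p$-length $l_p(A)$ of an abelian group $A$ is the smallest ordinal $\lambda$ such that $p^\lambda A$ is $p$-divisible, where $p^0A=A$, $p^{\alpha+1}A=p(p^\alpha A)$ and $p^\alpha A=\bigcap_{\beta<\alpha}p^\beta A$ for limit $\alpha$. An abelian group $A$ is called almost divisible if $l_p(A)=0$ for all but finitely many primes $p$ and $l_p(A)<\omega$ for every prime $p$. A group is bounded if $mA=0$ for some integer $m\ge1$. *)

theory Defs
  imports "HOL-Computational_Algebra.Primes"
begin

text \<open>Abelian groups are modelled as types of class ab_group_add (the group is UNIV).\<close>

fun mulN :: "nat \<Rightarrow> 'a::ab_group_add \<Rightarrow> 'a" where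
  "mulN 0 x = 0"
| "mulN (Suc n) x = x + mulN n x"

definition is_subgroup :: "'a::ab_group_add set \<Rightarrow> bool" where
  "is_subgroup S \<longleftrightarrow> 0 \<in> S \<and> (\<forall>x\<in>S. \<forall>y\<in>S. x + y \<in> S) \<and> (\<forall>x\<in>S. - x \<in> S)"

definition p_divisible :: "nat \<Rightarrow> 'a::ab_group_add set \<Rightarrow> bool" where
  "p_divisible p S \<longleftrightarrow> (\<forall>x\<in>S. \<exists>y\<in>S. mulN p y = x)"

fun ppow :: "nat \<Rightarrow> nat \<Rightarrow> 'a::ab_group_add set" where
  "ppow p 0 = UNIV"
| "ppow p (Suc n) = mulN p ` ppow p n"

text \<open>l_p(A) = 0 iff A is p-divisible; l_p(A) < omega iff p^n A is p-divisible for some finite n.\<close>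
definition almost_divisible :: "'a::ab_group_add itself \<Rightarrow> bool" where
  "almost_divisible _ \<longleftrightarrow>
     finite {p::nat. prime p \<and> \<not> p_divisible p (UNIV :: 'a set)} \<and>
     (\<forall>p::nat. prime p \<longrightarrow> (\<exists>n. p_divisible p (ppow p n :: 'a set)))"

definition divisible :: "'a::ab_group_add set \<Rightarrow> bool" where
  "divisible S \<longleftrightarrow> (\<forall>n::nat. n \<ge> 1 \<longrightarrow> (\<forall>x\<in>S. \<exists>y\<in>S. mulN n y = x))"

definition bounded_grp :: "'a::ab_group_add set \<Rightarrow> bool" where
  "bounded_grp S \<longleftrightarrow> (\<exists>m::nat. m \<ge> 1 \<and> (\<forall>x\<in>S. mulN m x = 0))"

definition internal_direct_sum :: "'a::ab_group_add set \<Rightarrow> 'a set \<Rightarrow> 'a set \<Rightarrow> bool" where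
  "internal_direct_sum G S T \<longleftrightarrow> is_subgroup S \<and> is_subgroup T \<and> S \<subseteq> G \<and> T \<subseteq> G \<and>
     S \<inter> T = {0} \<and> (\<forall>x\<in>G. \<exists>s\<in>S. \<exists>t\<in>T. x = s + t)"

definition group_hom :: "('a::ab_group_add \<Rightarrow> 'b::ab_group_add) \<Rightarrow> bool" where
  "group_hom f \<longleftrightarrow> (\<forall>x y. f (x + y) = f x + f y)"

definition pure_embedding :: "('a::ab_group_add \<Rightarrow> 'b::ab_group_add) \<Rightarrow> bool" where
  "pure_embedding f \<longleftrightarrow> group_hom f \<and> inj f \<and>
     (\<forall>n::nat. \<forall>a. (\<exists>z::'b. mulN n z = f a) \<longrightarrow> (\<exists>a'. mulN n (f a') = f a))"

text \<open>Groups containing A are represented by a pure embedding into an arbitrary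
  type 'b; the theorem is universally quantified over 'b.\<close>
definition alg_compact_wrt :: "'a::ab_group_add itself \<Rightarrow> 'b::ab_group_add itself \<Rightarrow> bool" where
  "alg_compact_wrt _ _ \<longleftrightarrow>
     (\<forall>f :: 'a \<Rightarrow> 'b. pure_embedding f \<longrightarrow> (\<exists>C. internal_direct_sum UNIV (range f) C))"

end

theory Submission
  imports Defs "HOL-Library.Set_Algebras"
begin

text \<open>
  If A is almost divisible, choose for each of the finitely many primes p at which A is not
  p-divisible an exponent e with p^e A p-divisible, and let m be the product of these p^e.
  Then m A is divisible, hence a direct summand, and any complement is killed by m.
  Conversely, if A = D \<oplus> B with D divisible and m B = 0, then p^e A is p-divisible for the
  p-part p^e of m, and A is p-divisible for every p not dividing m.

  For algebraic compactness let A = D \<oplus> B sit as a pure subgroup in G. Then B is a bounded pure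
  subgroup of G, hence a summand: G = B \<oplus> C1. The intersection of A with C1 is isomorphic to D,
  hence divisible and a summand of C1, and regrouping yields a complement of A in G.
  That a bounded pure subgroup E with m E = 0 is a summand is proved with Zorn's lemma on the
  subgroups C containing m G, meeting E trivially, for which (E + C)/m G is pure in G/m G:
  if a maximal such C had E + C \<noteq> G, an element of maximal p-power order modulo E + C
  would generate a cyclic subgroup, pure modulo E + C, by which C could be enlarged.
\<close>

section \<open>Multiples and subgroups\<close>

lemma mulN_add_right: "mulN n (x + y) = mulN n x + mulN n (y::'a::ab_group_add)"
  by (induction n) (auto simp: algebra_simps)

lemma mulN_add_left: "mulN (a + b) (x::'a::ab_group_add) = mulN a x + mulN b x"
  by (induction a) (auto simp: algebra_simps)

lemma mulN_mult: "mulN (a * b) (x::'a::ab_group_add) = mulN a (mulN b x)"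
  by (induction a) (auto simp: mulN_add_left mulN_add_right)

lemma mulN_commute: "mulN a (mulN b x) = mulN b (mulN a (x::'a::ab_group_add))"
  by (metis mulN_mult mult.commute)

lemma mulN_zero_right [simp]: "mulN n (0::'a::ab_group_add) = 0"
  by (induction n) auto

lemma mulN_minus: "mulN n (- x) = - mulN n (x::'a::ab_group_add)"
  by (induction n) (auto simp: algebra_simps)

lemma mulN_diff: "mulN n (x - y) = mulN n x - mulN n (y::'a::ab_group_add)"
  using mulN_add_right[of n x "- y"] mulN_minus[of n y] by simp

lemma subgroup_zero: "is_subgroup S \<Longrightarrow> 0 \<in> S"
  by (simp add: is_subgroup_def)

lemma subgroup_add: "is_subgroup S \<Longrightarrow> x \<in> S \<Longrightarrow> y \<in> S \<Longrightarrow> x + y \<in> S"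
  by (simp add: is_subgroup_def)

lemma subgroup_minus: "is_subgroup S \<Longrightarrow> x \<in> S \<Longrightarrow> - x \<in> S"
  by (simp add: is_subgroup_def)

lemma subgroup_diff: "is_subgroup S \<Longrightarrow> x \<in> S \<Longrightarrow> y \<in> S \<Longrightarrow> x - y \<in> S"
  by (metis diff_conv_add_uminus subgroup_add subgroup_minus)

lemma subgroup_mulN: "is_subgroup S \<Longrightarrow> x \<in> S \<Longrightarrow> mulN n x \<in> S"
  by (induction n) (auto intro: subgroup_zero subgroup_add)

lemma subgroup_UNIV: "is_subgroup UNIV"
  by (simp add: is_subgroup_def)

lemma subgroup_zero_set: "is_subgroup {0}"
  by (simp add: is_subgroup_def)

lemma subgroup_Int: "is_subgroup S \<Longrightarrow> is_subgroup T \<Longrightarrow> is_subgroup (S \<inter> T)"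
  unfolding is_subgroup_def by blast

lemma subgroup_set_plus:
  assumes S: "is_subgroup S" and T: "is_subgroup T"
  shows "is_subgroup (S + T)"
  unfolding is_subgroup_def
proof (intro conjI ballI)
  show "0 \<in> S + T"
    using set_plus_intro[OF subgroup_zero[OF S] subgroup_zero[OF T]] by simp
next
  fix x y assume "x \<in> S + T" "y \<in> S + T"
  then obtain s t s' t' where "x = s + t" "y = s' + t'" "s \<in> S" "t \<in> T" "s' \<in> S" "t' \<in> T"
    by (metis set_plus_elim)
  then have "x + y = (s + s') + (t + t')" "s + s' \<in> S" "t + t' \<in> T"
    by (simp_all add: algebra_simps subgroup_add S T)
  then show "x + y \<in> S + T" by (metis set_plus_intro)
next
  fix x assume "x \<in> S + T"
  then obtain s t where "x = s + t" "s \<in> S" "t \<in> T" by (metis set_plus_elim)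
  then have "- x = (- s) + (- t)" "- s \<in> S" "- t \<in> T"
    by (simp_all add: subgroup_minus S T)
  then show "- x \<in> S + T" by (metis set_plus_intro)
qed

lemma mem_set_plus_left: "0 \<in> T \<Longrightarrow> s \<in> S \<Longrightarrow> s \<in> S + T" for S T :: "'a::monoid_add set"
  using set_plus_intro[of s S 0 T] by simp

lemma mem_set_plus_right: "0 \<in> S \<Longrightarrow> t \<in> T \<Longrightarrow> t \<in> S + T" for S T :: "'a::monoid_add set"
  using set_plus_intro[of 0 S t T] by simp

lemma subgroup_range_mulN: "is_subgroup (range (mulN m :: 'a::ab_group_add \<Rightarrow> 'a))"
  unfolding is_subgroup_def
proof (intro conjI ballI)
  show "0 \<in> range (mulN m :: 'a \<Rightarrow> 'a)"
    using mulN_zero_right[of m] by (metis rangeI)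
next
  fix x y :: 'a assume "x \<in> range (mulN m)" "y \<in> range (mulN m)"
  then show "x + y \<in> range (mulN m)" by (auto simp flip: mulN_add_right)
next
  fix x :: 'a assume "x \<in> range (mulN m)"
  then show "- x \<in> range (mulN m)" by (auto simp flip: mulN_minus)
qed

lemma internal_direct_sum_iff:
  "internal_direct_sum G S T \<longleftrightarrow>
     is_subgroup S \<and> is_subgroup T \<and> S \<subseteq> G \<and> T \<subseteq> G \<and> S \<inter> T = {0} \<and> G \<subseteq> S + T"
proof -
  have "G \<subseteq> S + T \<longleftrightarrow> (\<forall>x\<in>G. \<exists>s\<in>S. \<exists>t\<in>T. x = s + t)"
    by (auto simp: set_plus_def)
  then show ?thesis by (simp add: internal_direct_sum_def)
qed

lemma internal_direct_sum_intro:
  assumes "is_subgroup S" "is_subgroup T" "S \<subseteq> G" "T \<subseteq> G" "S \<inter> T \<subseteq> {0}" "G \<subseteq> S + T"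
  shows "internal_direct_sum G S T"
proof -
  have "S \<inter> T = {0}" using assms(1,2,5) subgroup_zero[of S] subgroup_zero[of T] by blast
  then show ?thesis using assms by (simp add: internal_direct_sum_iff)
qed

lemma subgroup_coprime_mulN:
  assumes S: "is_subgroup S" and "coprime a (b::nat)" and a: "mulN a x \<in> S" and b: "mulN b x \<in> S"
  shows "x \<in> S"
proof (cases "a = 0")
  case True
  then show ?thesis using \<open>coprime a b\<close> b by simp
next
  case False
  obtain u v where "a * u = b * v + 1"
    using bezout_nat[OF False, of b] \<open>coprime a b\<close> by auto
  then have "mulN (a * u) x = mulN (b * v) x + x"
    using mulN_add_left[of "b * v" 1 x] by simp
  then have "x = mulN u (mulN a x) - mulN v (mulN b x)"
    by (simp add: mulN_mult mulN_commute[of u a] mulN_commute[of v b])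
  then show ?thesis
    using subgroup_diff[OF S subgroup_mulN[OF S a, of u] subgroup_mulN[OF S b, of v]] by simp
qed

lemma subgroup_Union_chain:
  assumes ch: "Ch \<in> chains F" and "Ch \<noteq> {}" and sg: "\<And>X. X \<in> F \<Longrightarrow> is_subgroup X"
  shows "is_subgroup (\<Union>Ch)"
  unfolding is_subgroup_def
proof (intro conjI ballI)
  show "0 \<in> \<Union>Ch"
    using \<open>Ch \<noteq> {}\<close> chainsD2[OF ch] sg subgroup_zero by blast
next
  fix x y assume "x \<in> \<Union>Ch" "y \<in> \<Union>Ch"
  then obtain X Y where XY: "X \<in> Ch" "Y \<in> Ch" "x \<in> X" "y \<in> Y" by blast
  have "is_subgroup X" "is_subgroup Y" using XY chainsD2[OF ch] sg by blast+
  then have "x + y \<in> X \<or> x + y \<in> Y"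
    using chainsD[OF ch XY(1,2)] XY(3,4) subgroup_add by blast
  then show "x + y \<in> \<Union>Ch" using XY(1,2) by blast
next
  fix x assume "x \<in> \<Union>Ch"
  then show "- x \<in> \<Union>Ch" using chainsD2[OF ch] sg subgroup_minus by blast
qed

lemma Zorn_nonempty_chains:
  assumes "A \<in> F" and "\<And>Ch. Ch \<in> chains F \<Longrightarrow> Ch \<noteq> {} \<Longrightarrow> \<Union>Ch \<in> F"
  obtains M where "M \<in> F" "\<And>X. X \<in> F \<Longrightarrow> M \<subseteq> X \<Longrightarrow> X = M"
proof -
  have "\<forall>Ch\<in>chains F. \<exists>U\<in>F. \<forall>X\<in>Ch. X \<subseteq> U"
  proof
    fix Ch assume ch: "Ch \<in> chains F"
    show "\<exists>U\<in>F. \<forall>X\<in>Ch. X \<subseteq> U"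
    proof (cases "Ch = {}")
      case True
      then show ?thesis using assms(1) by blast
    next
      case False
      then have "\<Union>Ch \<in> F" by (rule assms(2)[OF ch])
      then show ?thesis by blast
    qed
  qed
  from Zorn_Lemma2[OF this] obtain M where "M \<in> F" "\<forall>X\<in>F. M \<subseteq> X \<longrightarrow> X = M"
    by blast
  then show ?thesis using that by blast
qed

lemma set_plus_subset_subgroup:
  "is_subgroup H \<Longrightarrow> S \<subseteq> H \<Longrightarrow> T \<subseteq> H \<Longrightarrow> S + T \<subseteq> H"
  by (auto elim!: set_plus_elim intro: subgroup_add)

lemma psubset_set_plus:
  assumes "is_subgroup C" "0 \<in> Z" "z \<in> Z" "z \<notin> C"
  shows "C \<subset> C + Z"
proof -
  have "C \<subseteq> C + Z" using mem_set_plus_left[OF assms(2)] by blast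
  moreover have "z \<in> C + Z" using mem_set_plus_right[OF subgroup_zero[OF assms(1)] assms(3)] .
  ultimately show ?thesis using assms(4) by blast
qed

lemma exists_prime_multiple_step:
  assumes "x \<notin> K" and "m \<ge> 1" and "mulN m x \<in> K"
  obtains p q where "prime p" "mulN q x \<notin> K" "mulN p (mulN q x) \<in> K"
proof -
  have ex: "\<exists>k. k \<ge> 1 \<and> mulN k x \<in> K" using assms(2,3) by blast
  define k where "k = (LEAST k. k \<ge> 1 \<and> mulN k x \<in> K)"
  have k: "k \<ge> 1" "mulN k x \<in> K" using LeastI_ex[OF ex] unfolding k_def by auto
  have k_min: "mulN q x \<notin> K" if "q \<ge> 1" "q < k" for q
    using not_less_Least that unfolding k_def by blast
  have "k \<noteq> 1" using k assms(1) by auto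
  then obtain p where p: "prime p" "p dvd k" using prime_factor_nat by blast
  then obtain q where kq: "k = p * q" by blast
  have "q \<ge> 1" using kq k(1) by (cases q) auto
  moreover have "q < k" using kq prime_ge_2_nat[OF p(1)] \<open>q \<ge> 1\<close> by simp
  ultimately have "mulN q x \<notin> K" by (rule k_min)
  moreover have "mulN p (mulN q x) \<in> K" using k(2) unfolding kq mulN_mult .
  ultimately show ?thesis using p(1) that by blast
qed

section \<open>Divisible subgroups are direct summands\<close>

definition int_multiples :: "'a::ab_group_add \<Rightarrow> 'a set" where
  "int_multiples z = {mulN i z - mulN j z |i j. True}"

lemma int_multiples_cases:
  assumes "u \<in> int_multiples z"
  obtains n where "u = mulN n z" | n where "u = - mulN n z"
proof -
  obtain i j where u: "u = mulN i z - mulN j z"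
    using assms unfolding int_multiples_def by blast
  show ?thesis
  proof (cases "j \<le> i")
    case True
    then have "u = mulN (i - j) z" using u mulN_add_left[of "i - j" j z] by simp
    then show ?thesis using that by blast
  next
    case False
    then have "u = - mulN (j - i) z" using u mulN_add_left[of "j - i" i z] by simp
    then show ?thesis using that by blast
  qed
qed

lemma self_mem_int_multiples: "z \<in> int_multiples z"
proof -
  have "z = mulN 1 z - mulN 0 z" by simp
  then show ?thesis unfolding int_multiples_def by blast
qed

lemma subgroup_int_multiples: "is_subgroup (int_multiples z)"
  unfolding is_subgroup_def
proof (intro conjI ballI)
  have "0 = mulN 0 z - mulN 0 z" by simp
  then show "0 \<in> int_multiples z" unfolding int_multiples_def by blast
next
  fix x y assume "x \<in> int_multiples z" "y \<in> int_multiples z"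
  then obtain i j i' j' where "x = mulN i z - mulN j z" "y = mulN i' z - mulN j' z"
    unfolding int_multiples_def by blast
  then have "x + y = mulN (i + i') z - mulN (j + j') z" by (simp add: mulN_add_left)
  then show "x + y \<in> int_multiples z" unfolding int_multiples_def by blast
next
  fix x assume "x \<in> int_multiples z"
  then obtain i j where "x = mulN i z - mulN j z" unfolding int_multiples_def by blast
  then have "- x = mulN j z - mulN i z" by simp
  then show "- x \<in> int_multiples z" unfolding int_multiples_def by blast
qed

lemma int_multiples_subset: "is_subgroup H \<Longrightarrow> z \<in> H \<Longrightarrow> int_multiples z \<subseteq> H"
  unfolding int_multiples_def by (auto intro: subgroup_diff subgroup_mulN)

lemma int_multiples_mem_cancel:
  assumes K: "is_subgroup K" and C: "is_subgroup C"
    and multiples: "\<And>n. mulN n z \<in> K \<Longrightarrow> mulN n z \<in> C"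
    and u: "u \<in> int_multiples z" "u \<in> K"
  shows "u \<in> C"
  using u(1)
proof (cases rule: int_multiples_cases)
  case (1 n)
  then show ?thesis using multiples u(2) by simp
next
  case (2 n)
  then have "mulN n z \<in> K" using subgroup_minus[OF K u(2)] by simp
  then show ?thesis using 2 multiples subgroup_minus[OF C] by simp
qed

lemma set_plus_Int_zero:
  assumes C: "is_subgroup C" and D: "is_subgroup D" and "C \<inter> D \<subseteq> {0}"
    and Z: "\<And>u. u \<in> Z \<Longrightarrow> u \<in> D + C \<Longrightarrow> u \<in> C"
  shows "(C + Z) \<inter> D \<subseteq> {0}"
proof
  fix w assume w: "w \<in> (C + Z) \<inter> D"
  then obtain c u where c: "c \<in> C" and u: "u \<in> Z" and wcu: "w = c + u"
    by (auto elim: set_plus_elim)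
  have "u = w + (- c)" using wcu by simp
  also have "\<dots> \<in> D + C" using w subgroup_minus[OF C c] by blast
  finally have "u \<in> C" by (rule Z[OF u])
  then have "w \<in> C" using wcu subgroup_add[OF C c] by simp
  then show "w \<in> {0}" using w \<open>C \<inter> D \<subseteq> {0}\<close> by blast
qed

lemma divisible_complement_witness:
  assumes H: "is_subgroup H" and D: "is_subgroup D" "D \<subseteq> H" "divisible D"
    and C: "is_subgroup C" "C \<subseteq> H" and x: "x \<in> H" "x \<notin> D + C"
  obtains z where "z \<in> H" "z \<notin> D + C" "\<And>n. mulN n z \<in> D + C \<Longrightarrow> mulN n z \<in> C"
proof (cases "\<exists>k\<ge>1. mulN k x \<in> D + C")
  case False
  then have "mulN n x \<in> C" if "mulN n x \<in> D + C" for n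
    using that subgroup_zero[OF C(1)] by (cases n) auto
  then show ?thesis using that x by blast
next
  case True
  let ?K = "D + C"
  have K: "is_subgroup ?K" using subgroup_set_plus[OF D(1) C(1)] .
  obtain p q where p: "prime p" and y: "mulN q x \<notin> ?K" "mulN p (mulN q x) \<in> ?K"
    using True x(2) exists_prime_multiple_step by metis
  obtain d c where dc: "d \<in> D" "c \<in> C" "mulN p (mulN q x) = d + c"
    using y(2) by (auto elim: set_plus_elim)
  have "p \<ge> 1" using prime_gt_0_nat[OF p] by simp
  then obtain d' where d': "d' \<in> D" "mulN p d' = d"
    using D(3) dc(1) unfolding divisible_def by blast
  define z where "z = mulN q x - d'"
  have pz: "mulN p z = c" unfolding z_def mulN_diff dc(3) d'(2) by simp
  have "z \<in> H" unfolding z_def using subgroup_diff[OF H] subgroup_mulN[OF H x(1)] d'(1) D(2) by blast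
  moreover have z_notin: "z \<notin> ?K"
  proof
    assume "z \<in> ?K"
    then have "z + d' \<in> ?K" using subgroup_add[OF K] mem_set_plus_left[OF subgroup_zero[OF C(1)] d'(1)] by blast
    then show False using y(1) unfolding z_def by simp
  qed
  moreover have "mulN n z \<in> C" if nz: "mulN n z \<in> ?K" for n
  proof (cases "p dvd n")
    case True
    then obtain r where "n = r * p" by (metis dvd_def mult.commute)
    then show ?thesis using subgroup_mulN[OF C(1) dc(2)] by (simp add: mulN_mult pz)
  next
    case False
    then have "coprime p n" using prime_imp_coprime[OF p] by blast
    moreover have "mulN p z \<in> ?K" using pz mem_set_plus_right[OF subgroup_zero[OF D(1)] dc(2)] by simp
    ultimately have "z \<in> ?K" using subgroup_coprime_mulN[OF K _ _ nz] by blast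
    then show ?thesis using z_notin by blast
  qed
  ultimately show ?thesis using that by blast
qed

lemma divisible_subgroup_summand:
  assumes H: "is_subgroup H" and D: "is_subgroup D" "D \<subseteq> H" "divisible D"
  shows "\<exists>C. internal_direct_sum H D C"
proof -
  define F where "F = {C. is_subgroup C \<and> C \<subseteq> H \<and> C \<inter> D \<subseteq> {0}}"
  have "{0} \<in> F" unfolding F_def using subgroup_zero_set subgroup_zero[OF H] by auto
  moreover have "\<Union>Ch \<in> F" if ch: "Ch \<in> chains F" "Ch \<noteq> {}" for Ch
  proof -
    have "is_subgroup (\<Union>Ch)" by (rule subgroup_Union_chain[OF ch]) (simp add: F_def)
    moreover have "\<Union>Ch \<subseteq> H" "\<Union>Ch \<inter> D \<subseteq> {0}"
      using chainsD2[OF ch(1)] unfolding F_def by blast+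
    ultimately show ?thesis unfolding F_def by blast
  qed
  ultimately obtain M where "M \<in> F" and M_max: "\<And>X. X \<in> F \<Longrightarrow> M \<subseteq> X \<Longrightarrow> X = M"
    by (rule Zorn_nonempty_chains) blast+
  then have M: "is_subgroup M" "M \<subseteq> H" "M \<inter> D \<subseteq> {0}" unfolding F_def by blast+
  have "H \<subseteq> D + M"
  proof
    fix x assume x: "x \<in> H"
    show "x \<in> D + M"
    proof (rule ccontr)
      assume "x \<notin> D + M"
      then obtain z where z: "z \<in> H" "z \<notin> D + M" "\<And>n. mulN n z \<in> D + M \<Longrightarrow> mulN n z \<in> M"
        using divisible_complement_witness[OF H D M(1,2) x] by blast
      let ?M' = "M + int_multiples z"
      have "is_subgroup ?M'" using subgroup_set_plus[OF M(1) subgroup_int_multiples] .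
      moreover have "?M' \<subseteq> H"
        using set_plus_subset_subgroup[OF H M(2) int_multiples_subset[OF H z(1)]] .
      moreover have "?M' \<inter> D \<subseteq> {0}"
        using set_plus_Int_zero[OF M(1) D(1) M(3)]
          int_multiples_mem_cancel[OF subgroup_set_plus[OF D(1) M(1)] M(1) z(3)] by blast
      ultimately have "?M' \<in> F" unfolding F_def by blast
      moreover have "z \<notin> M" using z(2) mem_set_plus_right[OF subgroup_zero[OF D(1)]] by blast
      then have "M \<subset> ?M'"
        by (rule psubset_set_plus[OF M(1) subgroup_zero[OF subgroup_int_multiples] self_mem_int_multiples])
      ultimately show False using M_max by blast
    qed
  qed
  then show ?thesis using internal_direct_sum_intro[OF D(1) M(1) D(2) M(2)] M(3) by blast
qed

section \<open>Almost divisible groups\<close>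

lemma ppow_eq_range_mulN: "ppow p n = range (mulN (p ^ n) :: 'a::ab_group_add \<Rightarrow> 'a)"
proof (induction n)
  case 0
  show ?case by (simp add: fun_eq_iff)
next
  case (Suc n)
  then show ?case by (auto simp: image_iff mulN_mult)
qed

lemma p_divisible_ppow_of_direct_sum:
  fixes D B :: "'a::ab_group_add set"
  assumes p: "prime p" and m: "m = p ^ e * m'" "\<not> p dvd m'"
    and DB: "UNIV \<subseteq> D + B" and D: "divisible D" and B: "\<forall>b\<in>B. mulN m b = 0"
  shows "p_divisible p (ppow p e :: 'a set)"
  unfolding p_divisible_def ppow_eq_range_mulN
proof
  fix x :: 'a assume "x \<in> range (mulN (p ^ e))"
  then obtain g where g: "x = mulN (p ^ e) g" by blast
  from DB have "g \<in> D + B" by blast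
  then obtain d b where db: "d \<in> D" "b \<in> B" "g = d + b" by (auto elim: set_plus_elim)
  have "p \<ge> 1" using prime_gt_0_nat[OF p] by simp
  then obtain d1 where d1: "mulN p d1 = d" using D db(1) unfolding divisible_def by blast
  have "coprime p m'" using prime_imp_coprime[OF p m(2)] .
  then obtain u s where us: "p * u = m' * s + 1"
    using bezout_nat[of p m'] p by (auto simp: prime_gt_0_nat)
  \<comment> \<open>p u = m' s + 1, and p^e m' s kills b\<close>
  have "mulN (p ^ e) (mulN (m' * s) b) = mulN s (mulN m b)"
    unfolding m(1) by (simp flip: mulN_mult add: ac_simps)
  then have pu: "mulN (p ^ e) (mulN (p * u) b) = mulN (p ^ e) b"
    using B db(2) us mulN_add_left[of "m' * s" 1 b] by (simp add: mulN_add_right)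
  have "mulN p (mulN (p ^ e) (d1 + mulN u b)) = mulN (p ^ e) (d + mulN (p * u) b)"
    by (simp add: mulN_commute[of p] mulN_add_right d1 mulN_mult)
  also have "\<dots> = x" by (simp add: mulN_add_right pu g db(3))
  finally show "\<exists>y\<in>range (mulN (p ^ e)). mulN p y = x" by blast
qed

lemma direct_sum_imp_almost_divisible:
  fixes D B :: "'a::ab_group_add set"
  assumes DB: "internal_direct_sum UNIV D B" and D: "divisible D" and B: "bounded_grp B"
  shows "almost_divisible TYPE('a)"
proof -
  obtain m where m: "m \<ge> 1" "\<forall>b\<in>B. mulN m b = 0" using B unfolding bounded_grp_def by blast
  have "UNIV \<subseteq> D + B" using DB by (simp add: internal_direct_sum_iff)
  note ppow_divisible = p_divisible_ppow_of_direct_sum[OF _ _ _ this D m(2)]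
  have finite_length: "\<exists>e. p_divisible p (ppow p e :: 'a set)" if p: "prime p" for p
  proof -
    have "m \<noteq> 0" "\<not> is_unit p" using m(1) p by auto
    then obtain m' where "m = p ^ multiplicity p m * m'" "\<not> p dvd m'"
      by (rule multiplicity_decompose')
    then show ?thesis using ppow_divisible[OF p] by blast
  qed
  have "{p. prime p \<and> \<not> p_divisible p (UNIV :: 'a set)} \<subseteq> {p. p dvd m}"
  proof (intro subsetI CollectI)
    fix p assume "p \<in> {p. prime p \<and> \<not> p_divisible p (UNIV :: 'a set)}"
    then have p: "prime p" "\<not> p_divisible p (UNIV :: 'a set)" by blast+
    show "p dvd m"
    proof (rule ccontr)
      assume "\<not> p dvd m"
      then have "p_divisible p (ppow p 0 :: 'a set)" by (intro ppow_divisible[OF p(1)]) simp_all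
      then show False using p(2) by simp
    qed
  qed
  moreover have "finite {p. p dvd m}" using m(1) by (simp add: finite_divisors_nat)
  ultimately have "finite {p. prime p \<and> \<not> p_divisible p (UNIV :: 'a set)}"
    by (rule finite_subset)
  then show ?thesis using finite_length unfolding almost_divisible_def by blast
qed

lemma range_mulN_mult_mono:
  assumes "range (mulN a :: 'a::ab_group_add \<Rightarrow> 'a) \<subseteq> range (mulN b)"
  shows "range (mulN (c * a) :: 'a \<Rightarrow> 'a) \<subseteq> range (mulN (c * b))"
proof
  fix x :: 'a assume "x \<in> range (mulN (c * a))"
  then obtain g where x: "x = mulN c (mulN a g)" by (auto simp: mulN_mult)
  obtain h where "mulN a g = mulN b h" using assms by blast
  then have "x = mulN (c * b) h" using x by (simp add: mulN_mult)
  then show "x \<in> range (mulN (c * b))" by blast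
qed

lemma divisible_range_mulN:
  assumes "\<And>p. prime p \<Longrightarrow> range (mulN m :: 'a::ab_group_add \<Rightarrow> 'a) \<subseteq> range (mulN (p * m))"
  shows "divisible (range (mulN m :: 'a \<Rightarrow> 'a))"
  unfolding divisible_def
proof (intro allI impI)
  fix n :: nat assume "n \<ge> 1"
  then show "\<forall>x\<in>range (mulN m :: 'a \<Rightarrow> 'a). \<exists>y\<in>range (mulN m). mulN n y = x"
  proof (induction n rule: less_induct)
    case (less n)
    show ?case
    proof (cases "n = 1")
      case True
      then show ?thesis by auto
    next
      case False
      then obtain p where p: "prime p" "p dvd n" using prime_factor_nat by blast
      then obtain q where nq: "n = p * q" by blast
      have "q \<ge> 1" using nq less.prems by (cases q) auto
      moreover have "q < n" using nq prime_ge_2_nat[OF p(1)] \<open>q \<ge> 1\<close> by simp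
      ultimately have IH: "\<forall>x\<in>range (mulN m :: 'a \<Rightarrow> 'a). \<exists>y\<in>range (mulN m). mulN q y = x"
        using less.IH[of q] by blast
      show ?thesis
      proof
        fix x :: 'a assume "x \<in> range (mulN m)"
        then have "x \<in> range (mulN (p * m))" using assms[OF p(1)] by blast
        then obtain g where "x = mulN (p * m) g" by blast
        then have g: "x = mulN p (mulN m g)" by (simp add: mulN_mult)
        obtain y where y: "y \<in> range (mulN m)" "mulN q y = mulN m g" using IH by blast
        then have "mulN n y = x" using g nq by (simp add: mulN_mult)
        then show "\<exists>y\<in>range (mulN m). mulN n y = x" using y(1) by blast
      qed
    qed
  qed
qed

lemma almost_divisible_imp_divisible_range_mulN:
  assumes "almost_divisible TYPE('a::ab_group_add)"
  obtains m where "m \<ge> 1" "divisible (range (mulN m :: 'a \<Rightarrow> 'a))"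
proof -
  define P where "P = {p. prime p \<and> \<not> p_divisible p (UNIV :: 'a set)}"
  have "finite P" using assms unfolding almost_divisible_def P_def by blast
  have "\<exists>e. p_divisible p (ppow p e :: 'a set)" if "prime p" for p
    using assms that unfolding almost_divisible_def by blast
  then obtain e where e: "\<And>p. prime p \<Longrightarrow> p_divisible p (ppow p (e p) :: 'a set)" by metis
  define m where "m = (\<Prod>p\<in>P. p ^ e p)"
  have "m > 0" unfolding m_def P_def by (rule prod_pos) (simp add: prime_gt_0_nat)
  then have "m \<ge> 1" by simp
  moreover have "range (mulN m :: 'a \<Rightarrow> 'a) \<subseteq> range (mulN (p * m))" if p: "prime p" for p
  proof (cases "p \<in> P")
    case False
    then have p_div: "\<forall>x::'a. \<exists>y. mulN p y = x" using p unfolding P_def p_divisible_def by auto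
    show ?thesis
    proof
      fix x :: 'a assume "x \<in> range (mulN m)"
      then obtain g where g: "x = mulN m g" by blast
      obtain h where "mulN p h = g" using p_div by blast
      then have "x = mulN (p * m) h" using g by (simp add: mulN_mult mulN_commute)
      then show "x \<in> range (mulN (p * m))" by blast
    qed
  next
    case True
    have "range (mulN (p ^ e p) :: 'a \<Rightarrow> 'a) \<subseteq> range (mulN (p ^ Suc (e p)))"
    proof
      fix x :: 'a assume "x \<in> range (mulN (p ^ e p))"
      then obtain y where "y \<in> range (mulN (p ^ e p))" "mulN p y = x"
        using e[OF p] unfolding p_divisible_def ppow_eq_range_mulN by blast
      then obtain h where "x = mulN (p ^ Suc (e p)) h" by (auto simp: mulN_mult)
      then show "x \<in> range (mulN (p ^ Suc (e p)))" by blast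
    qed
    then have "range (mulN (k * p ^ e p) :: 'a \<Rightarrow> 'a) \<subseteq> range (mulN (k * p ^ Suc (e p)))"
      for k by (rule range_mulN_mult_mono)
    moreover have "p ^ e p dvd m" unfolding m_def using \<open>finite P\<close> True by (rule dvd_prodI)
    then obtain k where "m = k * p ^ e p" by (metis dvdE mult.commute)
    ultimately show ?thesis by (simp add: ac_simps)
  qed
  ultimately show ?thesis using divisible_range_mulN that by blast
qed

lemma divisible_range_mulN_imp_direct_sum:
  assumes m: "m \<ge> 1" and R: "divisible (range (mulN m :: 'a::ab_group_add \<Rightarrow> 'a))"
  shows "\<exists>D B :: 'a set. internal_direct_sum UNIV D B \<and> divisible D \<and> bounded_grp B"
proof -
  obtain C :: "'a set" where C: "internal_direct_sum UNIV (range (mulN m)) C"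
    using divisible_subgroup_summand[OF subgroup_UNIV subgroup_range_mulN subset_UNIV R] by blast
  \<comment> \<open>m c lies both in the complement and in the summand m G\<close>
  have "mulN m c = 0" if "c \<in> C" for c
  proof -
    have "mulN m c \<in> range (mulN m) \<inter> C"
      using C subgroup_mulN[of C c m] that unfolding internal_direct_sum_def by blast
    then show ?thesis using C unfolding internal_direct_sum_def by blast
  qed
  then have "bounded_grp C" unfolding bounded_grp_def using m by blast
  then show ?thesis using C R by blast
qed

lemma almost_divisible_iff_direct_sum:
  "almost_divisible TYPE('a::ab_group_add) \<longleftrightarrow>
     (\<exists>D B :: 'a set. internal_direct_sum UNIV D B \<and> divisible D \<and> bounded_grp B)"
proof
  assume "almost_divisible TYPE('a)"
  then obtain m where "m \<ge> 1" "divisible (range (mulN m :: 'a \<Rightarrow> 'a))"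
    by (rule almost_divisible_imp_divisible_range_mulN)
  then show "\<exists>D B :: 'a set. internal_direct_sum UNIV D B \<and> divisible D \<and> bounded_grp B"
    by (rule divisible_range_mulN_imp_direct_sum)
next
  assume "\<exists>D B :: 'a set. internal_direct_sum UNIV D B \<and> divisible D \<and> bounded_grp B"
  then show "almost_divisible TYPE('a)" using direct_sum_imp_almost_divisible by blast
qed

section \<open>Bounded pure subgroups are direct summands\<close>

definition pure_subgroup :: "'a::ab_group_add set \<Rightarrow> bool" where
  "pure_subgroup E \<longleftrightarrow> (\<forall>n. \<forall>e\<in>E. (\<exists>z. mulN n z = e) \<longrightarrow> (\<exists>e'\<in>E. mulN n e' = e))"

text \<open>For N \<subseteq> K this says that K/N is a pure subgroup of G/N.\<close>
definition pure_modulo :: "'a::ab_group_add set \<Rightarrow> 'a set \<Rightarrow> bool" where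
  "pure_modulo N K \<longleftrightarrow> (\<forall>k. \<forall>w\<in>K. \<forall>z. w - mulN k z \<in> N \<longrightarrow> (\<exists>\<kappa>\<in>K. w - mulN k \<kappa> \<in> N))"

lemma pure_bounded_Int_range_mulN:
  assumes "pure_subgroup E" and "\<forall>e\<in>E. mulN m e = 0"
  shows "range (mulN m) \<inter> E \<subseteq> {0}"
proof
  fix x assume "x \<in> range (mulN m) \<inter> E"
  then obtain e where "e \<in> E" "mulN m e = x"
    using assms(1) unfolding pure_subgroup_def by blast
  then show "x \<in> {0}" using assms(2) by auto
qed

lemma pure_bounded_mem_mulN:
  assumes E: "is_subgroup E" "pure_subgroup E" and mE: "\<forall>e\<in>E. mulN m e = 0"
    and e: "e \<in> E" and ez: "e - mulN k z \<in> range (mulN m)"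
  obtains \<kappa> where "\<kappa> \<in> E" "mulN k \<kappa> = e"
proof -
  obtain g where "e - mulN k z = mulN m g" using ez by blast
  then have g: "e = mulN k z + mulN m g" by (simp add: algebra_simps)
  define d where "d = gcd k m"
  obtain k' m' where km: "k = d * k'" "m = d * m'" unfolding d_def by (meson gcd_dvd1 gcd_dvd2 dvdE)
  have "mulN d (mulN k' z + mulN m' g) = e" using g km by (simp add: mulN_add_right mulN_mult)
  then obtain e' where e': "e' \<in> E" "mulN d e' = e"
    using E(2) e unfolding pure_subgroup_def by blast
  show ?thesis
  proof (cases "k = 0")
    case True
    then have "e = 0" using mE e' unfolding d_def by simp
    then show ?thesis using that[of 0] subgroup_zero[OF E(1)] True by simp
  next
    case False
    obtain u s where us: "k * u = m * s + d" using bezout_nat[OF False, of m] unfolding d_def by blast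
    have "mulN k (mulN u e') = mulN s (mulN m e') + mulN d e'"
      by (simp only: mulN_mult[symmetric] us mulN_add_left mult.commute[of m s])
    also have "\<dots> = e" using mE e' by simp
    finally show ?thesis using that subgroup_mulN[OF E(1) e'(1)] by blast
  qed
qed

lemma pure_modulo_range_mulN:
  assumes E: "is_subgroup E" "pure_subgroup E" and mE: "\<forall>e\<in>E. mulN m e = 0"
  shows "pure_modulo (range (mulN m)) (E + range (mulN m))"
  unfolding pure_modulo_def
proof (intro allI ballI impI)
  fix k w z assume w: "w \<in> E + range (mulN m)" and wz: "w - mulN k z \<in> range (mulN m)"
  obtain e g where e: "e \<in> E" and w_eq: "w = e + mulN m g" using w by (auto elim: set_plus_elim)
  have "e - mulN k z = (w - mulN k z) - mulN m g" using w_eq by (simp add: algebra_simps)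
  also have "\<dots> \<in> range (mulN m)" using subgroup_diff[OF subgroup_range_mulN wz rangeI] .
  finally have "e - mulN k z \<in> range (mulN m)" .
  then obtain \<kappa> where \<kappa>: "\<kappa> \<in> E" "mulN k \<kappa> = e" by (rule pure_bounded_mem_mulN[OF E mE e])
  then have "w - mulN k \<kappa> \<in> range (mulN m)" using w_eq by simp
  then show "\<exists>\<kappa>\<in>E + range (mulN m). w - mulN k \<kappa> \<in> range (mulN m)"
    using mem_set_plus_left[OF subgroup_zero[OF subgroup_range_mulN] \<kappa>(1)] by blast
qed

lemma pure_modulo_Union:
  assumes "\<And>X. X \<in> \<X> \<Longrightarrow> pure_modulo N (E + X)"
  shows "pure_modulo N (E + \<Union>\<X>)"
  unfolding pure_modulo_def
proof (intro allI ballI impI)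
  fix k w z assume w: "w \<in> E + \<Union>\<X>" and wz: "w - mulN k z \<in> N"
  then obtain e c X where "w = e + c" "e \<in> E" "c \<in> X" "X \<in> \<X>" by (auto elim: set_plus_elim)
  then have X: "X \<in> \<X>" and "w \<in> E + X" by auto
  then obtain \<kappa> where "\<kappa> \<in> E + X" "w - mulN k \<kappa> \<in> N"
    using assms wz unfolding pure_modulo_def by blast
  moreover have "E + X \<subseteq> E + \<Union>\<X>" using X by (intro set_plus_mono2) auto
  ultimately show "\<exists>\<kappa>\<in>E + \<Union>\<X>. w - mulN k \<kappa> \<in> N" by blast
qed

lemma coprime_prime_power: "prime p \<Longrightarrow> \<not> p dvd n \<Longrightarrow> coprime n (p ^ r)" for p n :: nat
  using prime_imp_coprime[of p n] by (simp add: coprime_commute)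

lemma p_power_mulN_mem:
  assumes K: "is_subgroup K" and p: "prime p" and m: "m = p ^ v * m'" "\<not> p dvd m'"
    and mK: "\<forall>x. mulN m x \<in> K" and b: "mulN (p ^ b) z \<in> K"
  shows "mulN (p ^ v) z \<in> K"
proof (rule subgroup_coprime_mulN[OF K coprime_prime_power[OF p m(2)]])
  show "mulN m' (mulN (p ^ v) z) \<in> K"
    using mK[rule_format, of z] unfolding m(1) mult.commute[of "p ^ v"] mulN_mult .
  show "mulN (p ^ b) (mulN (p ^ v) z) \<in> K"
    using subgroup_mulN[OF K b, of "p ^ v"] by (simp only: mulN_commute[of "p ^ b" "p ^ v" z])
qed

lemma exists_element_maximal_p_order:
  assumes K: "is_subgroup K" and m: "m \<ge> 1" "\<forall>x. mulN m x \<in> K" and x: "x \<notin> K"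
  obtains p a y where "prime p" "mulN (p ^ a) y \<in> K" "mulN (p ^ (a - 1)) y \<notin> K"
    "\<And>z b. mulN (p ^ b) z \<in> K \<Longrightarrow> mulN (p ^ a) z \<in> K"
proof -
  obtain p q where p: "prime p" and z0: "mulN q x \<notin> K" "mulN p (mulN q x) \<in> K"
    using exists_prime_multiple_step[OF x m(1) m(2)[rule_format]] by blast
  have "m \<noteq> 0" "\<not> is_unit p" using m(1) p by auto
  then obtain m' where m': "m = p ^ multiplicity p m * m'" "\<not> p dvd m'"
    by (rule multiplicity_decompose')
  define S where "S = {z. \<exists>b. mulN (p ^ b) z \<in> K}"
  \<comment> \<open>the p-primary part of G/K is bounded, since G/K is\<close>
  have "\<forall>z\<in>S. mulN (p ^ multiplicity p m) z \<in> K"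
    using p_power_mulN_mem[OF K p m' m(2)] unfolding S_def by blast
  then have ex: "\<exists>a. \<forall>z\<in>S. mulN (p ^ a) z \<in> K" by blast
  define a where "a = (LEAST a. \<forall>z\<in>S. mulN (p ^ a) z \<in> K)"
  have a: "\<forall>z\<in>S. mulN (p ^ a) z \<in> K" unfolding a_def by (rule LeastI_ex[OF ex])
  have "mulN (p ^ 1) (mulN q x) \<in> K" using z0(2) by simp
  then have z0S: "mulN q x \<in> S" unfolding S_def by blast
  have "a \<noteq> 0"
  proof
    assume "a = 0"
    then have "mulN q x \<in> K" using a z0S by simp
    then show False using z0(1) by blast
  qed
  then have "\<not> (\<forall>z\<in>S. mulN (p ^ (a - 1)) z \<in> K)"
    using not_less_Least[of "a - 1" "\<lambda>a. \<forall>z\<in>S. mulN (p ^ a) z \<in> K"] unfolding a_def[symmetric]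
    by simp
  then obtain y where "y \<in> S" "mulN (p ^ (a - 1)) y \<notin> K" by blast
  moreover have "mulN (p ^ a) y \<in> K" using a \<open>y \<in> S\<close> by blast
  moreover have "mulN (p ^ a) z \<in> K" if "mulN (p ^ b) z \<in> K" for z b
    using a that unfolding S_def by blast
  ultimately show ?thesis using that[OF p] by blast
qed

lemma p_power_dvd_of_mulN_mem:
  assumes K: "is_subgroup K" and p: "prime p"
    and y: "mulN (p ^ a) y \<in> K" "mulN (p ^ (a - 1)) y \<notin> K" and n: "mulN n y \<in> K"
  shows "p ^ a dvd n"
proof (cases "n = 0")
  case True
  then show ?thesis by simp
next
  case False
  moreover have "\<not> is_unit p" using p by auto
  ultimately obtain n' where "n = p ^ multiplicity p n * n'" "\<not> p dvd n'"
    by (rule multiplicity_decompose')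
  moreover define r where "r = multiplicity p n"
  ultimately have n': "n = p ^ r * n'" "\<not> p dvd n'" by simp_all
  show ?thesis
  proof (cases "a \<le> r")
    case True
    then have "p ^ a dvd p ^ r" by (simp add: le_imp_power_dvd)
    then show ?thesis using dvd_mult2[of "p ^ a" "p ^ r" n'] n'(1) by simp
  next
    case False
    define w where "w = mulN (p ^ r) y"
    have "mulN n' w = mulN n y" unfolding w_def n'(1) by (simp add: mulN_mult[symmetric] ac_simps)
    then have "mulN n' w \<in> K" using n by simp
    moreover have "mulN (p ^ (a - r)) w \<in> K"
      using y(1) False unfolding w_def mulN_mult[symmetric] power_add[symmetric] by simp
    ultimately have "w \<in> K" using subgroup_coprime_mulN[OF K coprime_prime_power[OF p n'(2)]] by blast
    then have "mulN (p ^ (a - 1 - r)) w \<in> K" by (rule subgroup_mulN[OF K])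
    then have "mulN (p ^ (a - 1)) y \<in> K"
      using False unfolding w_def mulN_mult[symmetric] power_add[symmetric] by simp
    then show ?thesis using y(2) by blast
  qed
qed

lemma p_primary_representative:
  assumes K: "is_subgroup K" and p: "prime p" and m: "m \<ge> 1" "\<forall>x. mulN m x \<in> K"
    and y: "mulN (p ^ a) y \<in> K"
    and y_max: "\<And>z b. mulN (p ^ b) z \<in> K \<Longrightarrow> mulN (p ^ a) z \<in> K"
    and h: "mulN j y - mulN k z \<in> K"
  obtains z' where "mulN (p ^ a) z' \<in> K" "mulN j y - mulN k z' \<in> K"
proof -
  have "m \<noteq> 0" "\<not> is_unit p" using m(1) p by auto
  then obtain m' where "m = p ^ multiplicity p m * m'" "\<not> p dvd m'"
    by (rule multiplicity_decompose')
  moreover define v where "v = multiplicity p m"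
  ultimately have m': "m = p ^ v * m'" "\<not> p dvd m'" by simp_all
  have "m' \<noteq> 0" using m' \<open>m \<noteq> 0\<close> by auto
  then obtain u s where us: "m' * u = p ^ v * s + 1"
    using bezout_nat[of m' "p ^ v"] coprime_prime_power[OF p m'(2)] by auto
  \<comment> \<open>alpha is 1 modulo p^v and kills the p'-part: z' := alpha z is the p-primary component of z\<close>
  define \<alpha> where "\<alpha> = m' * u"
  have "mulN (p ^ v) y \<in> K" using p_power_mulN_mem[OF K p m' m(2) y] .
  moreover have "mulN \<alpha> y = mulN s (mulN (p ^ v) y) + y"
    unfolding \<alpha>_def us by (simp add: mulN_add_left mulN_mult mult.commute[of "p ^ v"])
  ultimately have \<alpha>y: "mulN \<alpha> y - y \<in> K" using subgroup_mulN[OF K] by simp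
  have "mulN (p ^ v) (mulN \<alpha> z) = mulN u (mulN m z)"
    unfolding \<alpha>_def m'(1) by (simp add: mulN_mult[symmetric] ac_simps)
  then have "mulN (p ^ v) (mulN \<alpha> z) \<in> K" using subgroup_mulN[OF K] m(2) by simp
  then have "mulN (p ^ a) (mulN \<alpha> z) \<in> K" by (rule y_max)
  moreover have "mulN j y - mulN k (mulN \<alpha> z)
                   = mulN \<alpha> (mulN j y - mulN k z) - mulN j (mulN \<alpha> y - y)"
    by (simp add: mulN_diff mulN_commute[of \<alpha> j] mulN_commute[of \<alpha> k])
  then have "mulN j y - mulN k (mulN \<alpha> z) \<in> K"
    using subgroup_diff[OF K subgroup_mulN[OF K h] subgroup_mulN[OF K \<alpha>y]] by simp
  ultimately show ?thesis using that by blast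
qed

lemma p_power_cyclic_pure:
  assumes K: "is_subgroup K" and p: "prime p"
    and y: "mulN (p ^ a) y \<in> K" "mulN (p ^ (a - 1)) y \<notin> K"
    and z: "mulN (p ^ a) z \<in> K" and h: "mulN j y - mulN k z \<in> K"
  obtains i where "mulN j y - mulN k (mulN i y) \<in> K"
proof (cases "mulN k z \<in> K")
  case True
  then have "mulN j y \<in> K" using subgroup_add[OF K h True] by simp
  then show ?thesis using that[of 0] by simp
next
  case False
  have "k \<noteq> 0"
  proof
    assume "k = 0"
    with False subgroup_zero[OF K] show False by simp
  qed
  moreover have "\<not> is_unit p" using p by auto
  ultimately obtain k' where "k = p ^ multiplicity p k * k'" "\<not> p dvd k'"
    by (rule multiplicity_decompose')
  moreover define t where "t = multiplicity p k"
  ultimately have k': "k = p ^ t * k'" "\<not> p dvd k'" by simp_all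
  have "t < a"
  proof (rule ccontr)
    assume "\<not> t < a"
    then have "mulN k z = mulN (p ^ (t - a) * k') (mulN (p ^ a) z)"
      unfolding k'(1) by (simp add: mulN_mult[symmetric] power_add[symmetric] ac_simps)
    then show False using False subgroup_mulN[OF K z] by simp
  qed
  \<comment> \<open>multiplying the hypothesis by p^(a-t) kills the z-term, so p^t divides j\<close>
  have "mulN (p ^ (a - t)) (mulN j y - mulN k z)
          = mulN (p ^ (a - t) * j) y - mulN k' (mulN (p ^ a) z)"
    using \<open>t < a\<close> unfolding k'(1)
    by (simp add: mulN_diff mulN_mult[symmetric] power_add[symmetric] ac_simps)
  then have "mulN (p ^ (a - t) * j) y
               = mulN (p ^ (a - t)) (mulN j y - mulN k z) + mulN k' (mulN (p ^ a) z)"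
    by (metis diff_add_cancel)
  then have "mulN (p ^ (a - t) * j) y \<in> K"
    using subgroup_add[OF K subgroup_mulN[OF K h] subgroup_mulN[OF K z]] by simp
  then have "p ^ (a - t) * p ^ t dvd p ^ (a - t) * j"
    using p_power_dvd_of_mulN_mem[OF K p y] \<open>t < a\<close> by (simp add: power_add[symmetric])
  then obtain j' where j': "j = p ^ t * j'" using prime_gt_0_nat[OF p] by (auto elim: dvdE)
  have "k' \<noteq> 0" using k'(1) \<open>k \<noteq> 0\<close> by auto
  then obtain w s where ws: "k' * w = p ^ a * s + 1"
    using bezout_nat[of k' "p ^ a"] coprime_prime_power[OF p k'(2)] by auto
  have "k * (w * j') = p ^ t * j' * (k' * w)" unfolding k'(1) by (simp add: ac_simps)
  also have "\<dots> = j + (j' * s * p ^ t) * p ^ a" unfolding ws j' by (simp add: algebra_simps)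
  finally have "mulN j y - mulN k (mulN (w * j') y) = - mulN (j' * s * p ^ t) (mulN (p ^ a) y)"
    by (simp add: mulN_mult[symmetric] mulN_add_left)
  then show ?thesis
    using that[of "w * j'"] subgroup_minus[OF K subgroup_mulN[OF K y(1)]] by simp
qed

lemma maximal_p_order_cyclic_pure:
  assumes K: "is_subgroup K" and p: "prime p" and m: "m \<ge> 1" "\<forall>x. mulN m x \<in> K"
    and y: "mulN (p ^ a) y \<in> K" "mulN (p ^ (a - 1)) y \<notin> K"
    and y_max: "\<And>z b. mulN (p ^ b) z \<in> K \<Longrightarrow> mulN (p ^ a) z \<in> K"
    and h: "mulN j y - mulN k z \<in> K"
  shows "\<exists>i. mulN j y - mulN k (mulN i y) \<in> K"
proof -
  obtain z' where "mulN (p ^ a) z' \<in> K" "mulN j y - mulN k z' \<in> K"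
    using p_primary_representative[OF K p m y(1) y_max h] .
  then show ?thesis using p_power_cyclic_pure[OF K p y] by metis
qed

lemma subgroup_set_plus_multiples:
  assumes C: "is_subgroup C" and q: "q \<ge> 1" "mulN q z \<in> C"
  shows "is_subgroup (C + range (\<lambda>i. mulN i z))"
  unfolding is_subgroup_def
proof (intro conjI ballI)
  have "0 + mulN 0 z \<in> C + range (\<lambda>i. mulN i z)"
    by (rule set_plus_intro[OF subgroup_zero[OF C]]) blast
  then show "0 \<in> C + range (\<lambda>i. mulN i z)" by simp
next
  fix u v assume "u \<in> C + range (\<lambda>i. mulN i z)" "v \<in> C + range (\<lambda>i. mulN i z)"
  then obtain c i c' i' where "c \<in> C" "c' \<in> C" "u = c + mulN i z" "v = c' + mulN i' z"
    by (auto elim!: set_plus_elim)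
  then have "u + v = (c + c') + mulN (i + i') z" "c + c' \<in> C"
    by (simp_all add: mulN_add_left algebra_simps subgroup_add[OF C])
  then show "u + v \<in> C + range (\<lambda>i. mulN i z)" by (metis set_plus_intro rangeI)
next
  fix u assume "u \<in> C + range (\<lambda>i. mulN i z)"
  then obtain c i where c: "c \<in> C" and u: "u = c + mulN i z" by (auto elim!: set_plus_elim)
  \<comment> \<open>- i z = (q - 1) i z - i (q z), and q z lies in C\<close>
  have "mulN ((q - 1) * i) z + mulN i z = mulN i (mulN q z)"
    using q(1) by (simp flip: mulN_add_left mulN_mult add: algebra_simps)
  then have "- u = (- c - mulN i (mulN q z)) + mulN ((q - 1) * i) z"
    unfolding u by (simp add: algebra_simps)
  moreover have "- c - mulN i (mulN q z) \<in> C"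
    using subgroup_diff[OF C subgroup_minus[OF C c] subgroup_mulN[OF C q(2)]] .
  ultimately show "- u \<in> C + range (\<lambda>i. mulN i z)" by (metis set_plus_intro rangeI)
qed

lemma pure_modulo_extend:
  fixes E C N :: "'a::ab_group_add set"
  assumes K: "is_subgroup (E + C)" and pm: "pure_modulo N (E + C)" and N: "N \<subseteq> E + C"
    and \<kappa>: "\<kappa> \<in> E + C"
    and y_pure: "\<And>j k z. mulN j y - mulN k z \<in> E + C \<Longrightarrow> \<exists>i. mulN j y - mulN k (mulN i y) \<in> E + C"
  shows "pure_modulo N (E + (C + range (\<lambda>i. mulN i (y - \<kappa>))))"
  unfolding pure_modulo_def
proof (intro allI ballI impI)
  define y' where "y' = y - \<kappa>"
  fix n w z assume w: "w \<in> E + (C + range (\<lambda>i. mulN i (y - \<kappa>)))" and wz: "w - mulN n z \<in> N"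
  then obtain e c j where e: "e \<in> E" and c: "c \<in> C" and w_eq: "w = e + (c + mulN j y')"
    unfolding y'_def by (auto elim!: set_plus_elim)
  have ec: "e + c \<in> E + C" using e c by blast
  have "mulN j y - mulN n z = (w - mulN n z) + (mulN j \<kappa> - (e + c))"
    unfolding w_eq y'_def by (simp add: mulN_diff algebra_simps)
  also have "\<dots> \<in> E + C" using N wz subgroup_add[OF K] subgroup_diff[OF K subgroup_mulN[OF K \<kappa>] ec]
    by blast
  finally obtain i where i: "mulN j y - mulN n (mulN i y) \<in> E + C" using y_pure by blast
  \<comment> \<open>replacing z by i y' moves w into E + C, where the purity of E + C modulo N applies\<close>
  have "w - mulN n (mulN i y') = (e + c) + ((mulN j y - mulN n (mulN i y)) - mulN j \<kappa> + mulN n (mulN i \<kappa>))"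
    unfolding w_eq y'_def by (simp add: mulN_diff algebra_simps)
  also have "\<dots> \<in> E + C"
    using subgroup_add[OF K ec subgroup_add[OF K subgroup_diff[OF K i subgroup_mulN[OF K \<kappa>]]
          subgroup_mulN[OF K subgroup_mulN[OF K \<kappa>]]]] .
  finally have w': "w - mulN n (mulN i y') \<in> E + C" .
  have "(w - mulN n (mulN i y')) - mulN n (z - mulN i y') = w - mulN n z"
    by (simp add: mulN_diff)
  then obtain \<kappa>' where \<kappa>': "\<kappa>' \<in> E + C" "(w - mulN n (mulN i y')) - mulN n \<kappa>' \<in> N"
    using pm w' wz unfolding pure_modulo_def by metis
  then obtain e' c' where e': "e' \<in> E" "c' \<in> C" "\<kappa>' = e' + c'" by (auto elim: set_plus_elim)
  have "e' + (c' + mulN i y') \<in> E + (C + range (\<lambda>i. mulN i (y - \<kappa>)))"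
    using e' unfolding y'_def by blast
  moreover have "w - mulN n (e' + (c' + mulN i y')) = (w - mulN n (mulN i y')) - mulN n \<kappa>'"
    unfolding e'(3) by (simp add: mulN_add_right algebra_simps)
  ultimately show "\<exists>\<kappa>\<in>E + (C + range (\<lambda>i. mulN i (y - \<kappa>))). w - mulN n \<kappa> \<in> N"
    using \<kappa>'(2) by metis
qed

lemma maximal_p_order_multiple_cancel:
  assumes K: "is_subgroup K" and C: "is_subgroup C" and p: "prime p"
    and y: "mulN (p ^ a) y \<in> K" "mulN (p ^ (a - 1)) y \<notin> K"
    and \<kappa>: "\<kappa> \<in> K" and y\<kappa>: "mulN (p ^ a) (y - \<kappa>) \<in> C" and i: "mulN i (y - \<kappa>) \<in> K"
  shows "mulN i (y - \<kappa>) \<in> C"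
proof -
  have "mulN i y = mulN i (y - \<kappa>) + mulN i \<kappa>" by (simp add: mulN_diff)
  then have "mulN i y \<in> K" using subgroup_add[OF K i subgroup_mulN[OF K \<kappa>]] by simp
  then have "p ^ a dvd i" by (rule p_power_dvd_of_mulN_mem[OF K p y])
  then obtain i' where "i = i' * p ^ a" by (metis dvdE mult.commute)
  then show ?thesis using subgroup_mulN[OF C y\<kappa>, of i'] by (simp add: mulN_mult)
qed

lemma bounded_complement_extension:
  fixes E C :: "'a::ab_group_add set"
  assumes E: "is_subgroup E" and C: "is_subgroup C" and m: "m \<ge> 1" "range (mulN m) \<subseteq> C"
    and CE: "C \<inter> E \<subseteq> {0}" and pm: "pure_modulo (range (mulN m)) (E + C)" and x: "x \<notin> E + C"
  obtains C' where "is_subgroup C'" "C \<subset> C'" "C' \<inter> E \<subseteq> {0}"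
    "pure_modulo (range (mulN m)) (E + C')"
proof -
  let ?K = "E + C"
  have K: "is_subgroup ?K" using subgroup_set_plus[OF E C] .
  have CK: "C \<subseteq> ?K" using mem_set_plus_right[OF subgroup_zero[OF E]] by blast
  have mK: "\<forall>x. mulN m x \<in> ?K" using m(2) CK by blast
  obtain p a y where p: "prime p" and y: "mulN (p ^ a) y \<in> ?K" "mulN (p ^ (a - 1)) y \<notin> ?K"
    and y_max: "\<And>z b. mulN (p ^ b) z \<in> ?K \<Longrightarrow> mulN (p ^ a) z \<in> ?K"
    using exists_element_maximal_p_order[OF K m(1) mK x] by blast
  \<comment> \<open>correct y by an element of E + C so that p^a y lands in m G, hence in C\<close>
  have "mulN (p ^ a) y - mulN (p ^ a) y \<in> range (mulN m)"
    using subgroup_zero[OF subgroup_range_mulN] by simp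
  then obtain \<kappa> where \<kappa>: "\<kappa> \<in> ?K" "mulN (p ^ a) y - mulN (p ^ a) \<kappa> \<in> range (mulN m)"
    using pm y(1) unfolding pure_modulo_def by blast
  define y' where "y' = y - \<kappa>"
  have y'C: "mulN (p ^ a) y' \<in> C" using \<kappa>(2) m(2) unfolding y'_def mulN_diff by blast
  define C' where "C' = C + range (\<lambda>i. mulN i y')"
  have "is_subgroup C'"
    unfolding C'_def using subgroup_set_plus_multiples[OF C _ y'C] prime_gt_0_nat[OF p] by simp
  moreover have "C' \<inter> E \<subseteq> {0}" unfolding C'_def
  proof (rule set_plus_Int_zero[OF C E CE])
    fix u assume "u \<in> range (\<lambda>i. mulN i y')" "u \<in> ?K"
    then show "u \<in> C"
      using maximal_p_order_multiple_cancel[OF K C p y \<kappa>(1) y'C[unfolded y'_def]]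
      unfolding y'_def by blast
  qed
  moreover have "pure_modulo (range (mulN m)) (E + C')"
    unfolding C'_def y'_def
  proof (rule pure_modulo_extend[OF K pm order_trans[OF m(2) CK] \<kappa>(1)])
    fix j k z assume h: "mulN j y - mulN k z \<in> ?K"
    show "\<exists>i. mulN j y - mulN k (mulN i y) \<in> ?K"
      by (rule maximal_p_order_cyclic_pure[OF K p m(1) mK y _ h]) (rule y_max)
  qed
  moreover have "C \<subset> C'"
  proof -
    have "y' \<notin> C"
    proof
      assume "y' \<in> C"
      then have "y' + \<kappa> \<in> ?K" using subgroup_add[OF K _ \<kappa>(1)] CK by blast
      then have "y \<in> ?K" unfolding y'_def by simp
      then show False using y(2) subgroup_mulN[OF K] by blast
    qed
    moreover have "mulN 0 y' \<in> range (\<lambda>i. mulN i y')" "mulN 1 y' \<in> range (\<lambda>i. mulN i y')"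
      by (rule rangeI)+
    ultimately show ?thesis unfolding C'_def by (intro psubset_set_plus[OF C]) simp_all
  qed
  ultimately show ?thesis using that by blast
qed

lemma bounded_pure_subgroup_summand:
  assumes E: "is_subgroup E" "pure_subgroup E" "bounded_grp E"
  shows "\<exists>C. internal_direct_sum UNIV E C"
proof -
  obtain m where m: "m \<ge> 1" "\<forall>e\<in>E. mulN m e = 0" using E(3) unfolding bounded_grp_def by blast
  let ?N = "range (mulN m)"
  define F where "F = {C. is_subgroup C \<and> ?N \<subseteq> C \<and> C \<inter> E \<subseteq> {0} \<and> pure_modulo ?N (E + C)}"
  have "?N \<in> F" unfolding F_def
    using subgroup_range_mulN pure_bounded_Int_range_mulN[OF E(2) m(2)]
      pure_modulo_range_mulN[OF E(1,2) m(2)] by blast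
  moreover have "\<Union>Ch \<in> F" if ch: "Ch \<in> chains F" "Ch \<noteq> {}" for Ch
  proof -
    have Ch: "\<And>X. X \<in> Ch \<Longrightarrow> X \<in> F" using chainsD2[OF ch(1)] by blast
    have "is_subgroup (\<Union>Ch)" by (rule subgroup_Union_chain[OF ch]) (simp add: F_def)
    moreover have "?N \<subseteq> \<Union>Ch" "\<Union>Ch \<inter> E \<subseteq> {0}"
      using ch(2) Ch unfolding F_def by blast+
    moreover have "pure_modulo ?N (E + \<Union>Ch)" using Ch unfolding F_def by (blast intro: pure_modulo_Union)
    ultimately show ?thesis unfolding F_def by blast
  qed
  ultimately obtain M where "M \<in> F" and M_max: "\<And>X. X \<in> F \<Longrightarrow> M \<subseteq> X \<Longrightarrow> X = M"
    by (rule Zorn_nonempty_chains) blast+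
  then have M: "is_subgroup M" "?N \<subseteq> M" "M \<inter> E \<subseteq> {0}" "pure_modulo ?N (E + M)"
    unfolding F_def by blast+
  have "UNIV \<subseteq> E + M"
  proof
    fix x :: 'a
    show "x \<in> E + M"
    proof (rule ccontr)
      assume "x \<notin> E + M"
      then obtain C' where C': "is_subgroup C'" "M \<subset> C'" "C' \<inter> E \<subseteq> {0}" "pure_modulo ?N (E + C')"
        by (rule bounded_complement_extension[OF E(1) M(1) m(1) M(2-4)])
      then have "C' \<in> F" using M(2) unfolding F_def by blast
      then show False using M_max C'(2) by blast
    qed
  qed
  then show ?thesis using internal_direct_sum_intro[OF E(1) M(1)] M(3) by blast
qed

section \<open>Algebraic compactness\<close>

lemma group_hom_zero: "group_hom f \<Longrightarrow> f 0 = 0"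
  unfolding group_hom_def by (metis add_0 add_cancel_right_left)

lemma group_hom_minus: "group_hom f \<Longrightarrow> f (- x) = - f x"
  using group_hom_zero[of f] unfolding group_hom_def by (metis add.right_inverse eq_neg_iff_add_eq_0)

lemma group_hom_mulN: "group_hom f \<Longrightarrow> f (mulN n x) = mulN n (f x)"
  by (induction n) (auto simp: group_hom_zero group_hom_def)

lemma subgroup_image:
  assumes f: "group_hom f" and S: "is_subgroup S"
  shows "is_subgroup (f ` S)"
  unfolding is_subgroup_def
proof (intro conjI ballI)
  show "0 \<in> f ` S" using group_hom_zero[OF f] subgroup_zero[OF S] by (metis image_eqI)
next
  fix x y assume "x \<in> f ` S" "y \<in> f ` S"
  then obtain a b where "a \<in> S" "b \<in> S" "x = f a" "y = f b" by blast
  then show "x + y \<in> f ` S" using f subgroup_add[OF S] unfolding group_hom_def by (metis image_eqI)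
next
  fix x assume "x \<in> f ` S"
  then obtain a where "a \<in> S" "x = f a" by blast
  then show "- x \<in> f ` S" using group_hom_minus[OF f] subgroup_minus[OF S] by (metis image_eqI)
qed

lemma divisible_image:
  assumes f: "group_hom f" and D: "divisible D"
  shows "divisible (f ` D)"
  unfolding divisible_def
proof (intro allI impI ballI)
  fix n :: nat and x assume n: "n \<ge> 1" and "x \<in> f ` D"
  then obtain d where d: "d \<in> D" "x = f d" by blast
  then obtain d' where "d' \<in> D" "mulN n d' = d" using D n unfolding divisible_def by blast
  then have "mulN n (f d') = x" using d(2) group_hom_mulN[OF f, of n d'] by simp
  then show "\<exists>y\<in>f ` D. mulN n y = x" using \<open>d' \<in> D\<close> by blast
qed

lemma bounded_grp_image:
  assumes f: "group_hom f" and "bounded_grp B"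
  shows "bounded_grp (f ` B)"
proof -
  obtain m where "m \<ge> 1" "\<forall>b\<in>B. mulN m b = 0" using assms(2) unfolding bounded_grp_def by blast
  then have "\<forall>x\<in>f ` B. mulN m x = 0"
    by (auto simp: group_hom_mulN[OF f, symmetric] group_hom_zero[OF f])
  then show ?thesis unfolding bounded_grp_def using \<open>m \<ge> 1\<close> by blast
qed

lemma pure_subgroup_image_summand:
  assumes f: "pure_embedding f" and DB: "internal_direct_sum UNIV D B"
  shows "pure_subgroup (f ` B)"
  unfolding pure_subgroup_def
proof (intro allI ballI impI)
  fix n e assume "e \<in> f ` B" and "\<exists>z. mulN n z = e"
  then obtain b where b: "b \<in> B" "e = f b" and "\<exists>z. mulN n z = f b" by blast
  have hom: "group_hom f" and "inj f" using f unfolding pure_embedding_def by blast+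
  have D: "is_subgroup D" and B: "is_subgroup B" and "D \<inter> B = {0}" and "UNIV \<subseteq> D + B"
    using DB unfolding internal_direct_sum_iff by blast+
  obtain a where "mulN n (f a) = f b"
    using f \<open>\<exists>z. mulN n z = f b\<close> unfolding pure_embedding_def by blast
  then have na: "mulN n a = b" using \<open>inj f\<close> by (simp add: group_hom_mulN[OF hom, symmetric] inj_eq)
  have "a \<in> D + B" using \<open>UNIV \<subseteq> D + B\<close> by blast
  then obtain d b' where db': "a = d + b'" "d \<in> D" "b' \<in> B" by (rule set_plus_elim)
  have "mulN n d = b - mulN n b'" using na db'(1) by (simp add: mulN_add_right eq_diff_eq)
  moreover have "b - mulN n b' \<in> B" using subgroup_diff[OF B b(1) subgroup_mulN[OF B db'(3)]] .
  moreover have "mulN n d \<in> D" using subgroup_mulN[OF D db'(2)] .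
  ultimately have "mulN n d \<in> D \<inter> B" by simp
  then have "mulN n d = 0" using \<open>D \<inter> B = {0}\<close> by simp
  then have "b = mulN n b'" using na db'(1) by (simp add: mulN_add_right)
  then have "e = mulN n (f b')" using b(2) by (simp add: group_hom_mulN[OF hom])
  then show "\<exists>e'\<in>f ` B. mulN n e' = e" using db'(3) by blast
qed

lemma divisible_Int_complement:
  assumes SC: "internal_direct_sum UNIV S C" and R: "is_subgroup R" "S \<subseteq> R"
    and D: "divisible D" "D \<subseteq> R" "R \<subseteq> D + S"
  shows "divisible (R \<inter> C)"
  unfolding divisible_def
proof (intro allI impI ballI)
  fix n :: nat and x assume n: "n \<ge> 1" and x: "x \<in> R \<inter> C"
  have S: "is_subgroup S" and C: "is_subgroup C" and "S \<inter> C = {0}" and "UNIV \<subseteq> S + C"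
    using SC unfolding internal_direct_sum_iff by blast+
  have "x \<in> D + S" using x D(3) by blast
  then obtain d s where ds: "x = d + s" "d \<in> D" "s \<in> S" by (rule set_plus_elim)
  obtain d' where d': "d' \<in> D" "mulN n d' = d" using D(1) ds(2) n unfolding divisible_def by blast
  have "d' \<in> S + C" using \<open>UNIV \<subseteq> S + C\<close> by blast
  then obtain e c where ec: "d' = e + c" "e \<in> S" "c \<in> C" by (rule set_plus_elim)
  have "mulN n c - x = - (mulN n e + s)"
    using ds(1) d'(2) ec(1) by (simp add: mulN_add_right algebra_simps)
  moreover have "- (mulN n e + s) \<in> S"
    using subgroup_minus[OF S subgroup_add[OF S subgroup_mulN[OF S ec(2)] ds(3)]] .
  moreover have "mulN n c - x \<in> C" using subgroup_diff[OF C subgroup_mulN[OF C ec(3)]] x by blast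
  ultimately have "mulN n c - x \<in> S \<inter> C" by simp
  then have "mulN n c = x" using \<open>S \<inter> C = {0}\<close> by simp
  moreover have "c \<in> R"
    using subgroup_diff[OF R(1), of d' e] ec d'(1) D(2) R(2) by (auto simp: algebra_simps)
  ultimately show "\<exists>y\<in>R \<inter> C. mulN n y = x" using ec(3) by blast
qed

lemma internal_direct_sum_regroup:
  assumes SC: "internal_direct_sum UNIV S C1" and C1: "internal_direct_sum C1 (R \<inter> C1) C"
    and R: "is_subgroup R" "S \<subseteq> R"
  shows "internal_direct_sum UNIV R C"
proof (rule internal_direct_sum_intro)
  show "is_subgroup R" "is_subgroup C" "R \<subseteq> UNIV" "C \<subseteq> UNIV"
    using R(1) C1 unfolding internal_direct_sum_def by blast+
  show "R \<inter> C \<subseteq> {0}" using C1 unfolding internal_direct_sum_def by blast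
  show "UNIV \<subseteq> R + C"
  proof
    fix x
    obtain s c1 where "s \<in> S" "c1 \<in> C1" "x = s + c1" using SC unfolding internal_direct_sum_def by blast
    moreover obtain r c where "r \<in> R \<inter> C1" "c \<in> C" "c1 = r + c"
      using C1 \<open>c1 \<in> C1\<close> unfolding internal_direct_sum_def by blast
    ultimately have "x = (s + r) + c" "s + r \<in> R" using subgroup_add[OF R(1)] R(2)
      by (auto simp: algebra_simps)
    moreover have "(s + r) + c \<in> R + C" using \<open>s + r \<in> R\<close> \<open>c \<in> C\<close> by (rule set_plus_intro)
    ultimately show "x \<in> R + C" by simp
  qed
qed

lemma almost_divisible_imp_alg_compact:
  assumes "almost_divisible TYPE('a::ab_group_add)"
  shows "alg_compact_wrt TYPE('a) TYPE('b::ab_group_add)"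
  unfolding alg_compact_wrt_def
proof (intro allI impI)
  fix f :: "'a \<Rightarrow> 'b" assume f: "pure_embedding f"
  then have hom: "group_hom f" unfolding pure_embedding_def by blast
  from assms obtain D B :: "'a set"
    where DB: "internal_direct_sum UNIV D B" and "divisible D" "bounded_grp B"
    unfolding almost_divisible_iff_direct_sum by blast
  have B: "is_subgroup B" using DB unfolding internal_direct_sum_def by blast
  obtain C1 where C1: "internal_direct_sum UNIV (f ` B) C1"
    using bounded_pure_subgroup_summand[OF subgroup_image[OF hom B]
      pure_subgroup_image_summand[OF f DB] bounded_grp_image[OF hom \<open>bounded_grp B\<close>]] by blast
  have R: "is_subgroup (range f)" "f ` B \<subseteq> range f"
    by (rule subgroup_image[OF hom subgroup_UNIV], rule image_mono[OF subset_UNIV])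
  have "range f \<subseteq> f ` D + f ` B"
  proof
    fix x assume "x \<in> range f"
    then obtain a where x: "x = f a" by blast
    have "UNIV \<subseteq> D + B" using DB unfolding internal_direct_sum_iff by blast
    then have "a \<in> D + B" by blast
    then obtain d b where db: "a = d + b" "d \<in> D" "b \<in> B" by (rule set_plus_elim)
    then have "x = f d + f b" using hom x unfolding group_hom_def by simp
    moreover have "f d + f b \<in> f ` D + f ` B" by (rule set_plus_intro[OF imageI imageI]) (fact db)+
    ultimately show "x \<in> f ` D + f ` B" by simp
  qed
  then have "divisible (range f \<inter> C1)"
    by (rule divisible_Int_complement[OF C1 R divisible_image[OF hom \<open>divisible D\<close>]
          image_mono[OF subset_UNIV]])
  moreover have "is_subgroup C1" using C1 unfolding internal_direct_sum_def by blast
  ultimately obtain C where "internal_direct_sum C1 (range f \<inter> C1) C"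
    using divisible_subgroup_summand[OF \<open>is_subgroup C1\<close> subgroup_Int[OF R(1) \<open>is_subgroup C1\<close>]
        Int_lower2] by blast
  then have "internal_direct_sum UNIV (range f) C" by (rule internal_direct_sum_regroup[OF C1 _ R])
  then show "\<exists>C. internal_direct_sum UNIV (range f) C" ..
qed

theorem mainTheorem4:
  shows "(almost_divisible TYPE('a::ab_group_add) \<longleftrightarrow>
           (\<exists>D B :: 'a set. internal_direct_sum UNIV D B \<and> divisible D \<and> bounded_grp B))
       \<and> (almost_divisible TYPE('a) \<longrightarrow> alg_compact_wrt TYPE('a) TYPE('b::ab_group_add))"
  using almost_divisible_iff_direct_sum almost_divisible_imp_alg_compact by blast

end
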